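(* The fixed points of the map $T_1$ (i.e. $F\in\Gamma_0(\mathbb{R}_+)$ with $T_1(F)=F$) are exactly the functions $F(s)=c|s-1|$ with $c\in[0,+\infty]$, where for $c=+\infty$ this means $F=I_{\{1\}}$ ($F(1)=0$, $F(s)=+\infty$ for $s\neq1$). Moreover, for $G\in\Gamma_0(\mathbb{R}_+)$, the marginal perspective function $H_G$ is a metric on $[0,+\infty)$ if and only if there is $c\in(0,+\infty)$ with $H_G(r,t)=c|r-t|$ for all $r,t\ge0$.
   Context: $\Gamma_0(\mathbb{R}_+)$ is the set of functions $F:[0,\infty)\to[0,\infty]$ that are convex, lower semicontinuous, with $F(1)=0$. For $F\in\Gamma_0(\mathbb{R}_+)$: $\mathrm{rec}(F)(r)=\lim_{\alpha\to\infty}F(1+\alpha r)/\alpha$; the perspective function is $\hat F(r,t)=tF(r/t)$ for $t>0$, $\hat F(r,0)=\mathrm{rec}(F)(r)$. The marginal perspective function $H_F$ is the lower semicontinuous envelope of $\tilde H_F(r_1,r_2)=\inf_{\theta>0}[\hat F(\theta,r_1)+\hat F(\theta,r_2)]$; it is symmetric, jointly convex, positively $1$-homogeneous and vanishes on the diagonal. $T_1(F)(s)=H_F(1,s)$. A metric on $[0,\infty)$ is a function $D:[0,\infty)^2\to[0,\infty)$ with $D(x,y)=0\iff x=y$, symmetric, satisfying the triangle inequality. *)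

theory Defs
  imports "HOL-Analysis.Analysis" "HOL-Library.Extended_Nonnegative_Real"
begin

text \<open>Functions [0,inf) -> [0,inf] are modelled as real => ennreal; only values on
  the nonnegative reals matter.\<close>

definition lsc_on :: "'a::topological_space set \<Rightarrow> ('a \<Rightarrow> ennreal) \<Rightarrow> bool" where
  "lsc_on S f \<longleftrightarrow> (\<forall>a. closedin (top_of_set S) {x\<in>S. f x \<le> a})"

definition Gamma0 :: "(real \<Rightarrow> ennreal) set" where
  "Gamma0 = {F. (\<forall>x\<ge>0. \<forall>y\<ge>0. \<forall>l::real. 0 \<le> l \<and> l \<le> 1 \<longrightarrow>
                    F ((1 - l) * x + l * y) \<le> ennreal (1 - l) * F x + ennreal l * F y)
              \<and> lsc_on {0..} F \<and> F 1 = 0}"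

definition recF :: "(real \<Rightarrow> ennreal) \<Rightarrow> real \<Rightarrow> ennreal" where
  "recF F r = Lim at_top (\<lambda>a::real. F (1 + a * r) / ennreal a)"

definition persp :: "(real \<Rightarrow> ennreal) \<Rightarrow> real \<Rightarrow> real \<Rightarrow> ennreal" where
  "persp F r t = (if t > 0 then ennreal t * F (r / t) else recF F r)"

definition Htilde :: "(real \<Rightarrow> ennreal) \<Rightarrow> real \<Rightarrow> real \<Rightarrow> ennreal" where
  "Htilde F r1 r2 = (INF \<theta>\<in>{0<..}. persp F \<theta> r1 + persp F \<theta> r2)"

definition quadrant :: "(real \<times> real) set" where
  "quadrant = {p. 0 \<le> fst p \<and> 0 \<le> snd p}"

definition HF :: "(real \<Rightarrow> ennreal) \<Rightarrow> real \<Rightarrow> real \<Rightarrow> ennreal" where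
  "HF F r1 r2 = (SUP g\<in>{g. lsc_on quadrant g \<and> (\<forall>p\<in>quadrant. g p \<le> Htilde F (fst p) (snd p))}.
                    g (r1, r2))"

definition T1 :: "(real \<Rightarrow> ennreal) \<Rightarrow> real \<Rightarrow> ennreal" where
  "T1 F s = HF F 1 s"

definition is_metric_nonneg :: "(real \<Rightarrow> real \<Rightarrow> ennreal) \<Rightarrow> bool" where
  "is_metric_nonneg D \<longleftrightarrow>
     (\<forall>x\<ge>0. \<forall>y\<ge>0. D x y < \<infinity>) \<and>
     (\<forall>x\<ge>0. \<forall>y\<ge>0. D x y = 0 \<longleftrightarrow> x = y) \<and>
     (\<forall>x\<ge>0. \<forall>y\<ge>0. D x y = D y x) \<and>
     (\<forall>x\<ge>0. \<forall>y\<ge>0. \<forall>z\<ge>0. D x z \<le> D x y + D y z)"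

end

theory Submission
  imports Defs
begin

text \<open>
  \<open>H\<^sub>F\<close> is positively 1-homogeneous, and a convexity argument for the perspective function
  gives the chord inequality \<open>T\<^sub>1 F x \<le> (x - 1)/(y - 1) \<cdot> T\<^sub>1 F y\<close> for \<open>1 < x < y\<close>.
  If \<open>F = T\<^sub>1 F\<close> (or if \<open>H\<^sub>G\<close> is a metric and \<open>F = T\<^sub>1 G\<close>), then moreover
  \<open>F s = s F(1/s)\<close> and \<open>F(x\<^sup>2) \<le> (1 + x) F x\<close>: the first from the choice \<open>\<theta> = 1\<close> in
  \<open>H\<^sub>F\<close> (resp. symmetry of the metric), the second from \<open>\<theta> = x\<close> (resp. the triangle
  inequality through \<open>x\<close>). Hence \<open>F(x)/(x - 1)\<close> is nondecreasing on \<open>(1,\<infinity>)\<close> and does not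
  increase under squaring, so it is constant; reflection extends \<open>F = c|s - 1|\<close> to \<open>(0,1)\<close>,
  lower semicontinuity (resp. the triangle inequality) to \<open>s = 0\<close>, and homogeneity to the
  whole quadrant. Conversely \<open>c|r - t|\<close> is a lower semicontinuous minorant of \<open>\<tilde>H\<^sub>F\<close>
  which is attained at \<open>\<theta> = t\<close>.
\<close>

lemma ennreal_mult_inverse_cancel: "(a::real) > 0 \<Longrightarrow> ennreal a * (ennreal (1/a) * x) = x"
  by (simp add: mult.assoc[symmetric] ennreal_mult'[symmetric])

lemma ennreal_inverse_mult_le_iff:
  assumes "(k::real) > 0"
  shows "ennreal (1/k) * z \<le> a \<longleftrightarrow> z \<le> ennreal k * a"
proof -
  have "ennreal (1/k) * z \<le> a \<longleftrightarrow> ennreal k * (ennreal (1/k) * z) \<le> ennreal k * a"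
    using assms by (subst ennreal_mult_le_mult_iff) auto
  then show ?thesis using assms by (simp add: ennreal_mult_inverse_cancel)
qed

lemma ennreal_le_mult_INF:
  assumes k: "(k::real) > 0" and le: "\<forall>\<theta>\<in>A. x \<le> ennreal k * f \<theta>"
  shows "x \<le> ennreal k * (INF \<theta>\<in>A. f \<theta>)"
proof -
  have "ennreal (1/k) * x \<le> (INF \<theta>\<in>A. f \<theta>)"
    using le by (intro INF_greatest) (simp add: ennreal_inverse_mult_le_iff[OF k])
  then show ?thesis by (simp add: ennreal_inverse_mult_le_iff[OF k])
qed

lemma divide_ennreal_eq_mult: "(a::real) > 0 \<Longrightarrow> x / ennreal a = ennreal (1/a) * x"
  by (simp add: divide_ennreal_def inverse_ennreal mult.commute divide_inverse)

section \<open>The marginal perspective function\<close>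

lemma Gamma0_convexD:
  assumes "F \<in> Gamma0" "x \<ge> 0" "y \<ge> 0" "0 \<le> l" "l \<le> 1"
  shows "F ((1 - l) * x + l * y) \<le> ennreal (1 - l) * F x + ennreal l * F y"
  using assms unfolding Gamma0_def by blast

lemma Gamma0_at_1: "F \<in> Gamma0 \<Longrightarrow> F 1 = 0"
  unfolding Gamma0_def by blast

lemma HF_le_Htilde:
  assumes "r \<ge> 0" "t \<ge> 0"
  shows "HF F r t \<le> Htilde F r t"
  unfolding HF_def using assms by (auto intro!: SUP_least simp: quadrant_def)

lemma lsc_minorant_le_HF:
  assumes "lsc_on quadrant g" "\<forall>p\<in>quadrant. g p \<le> Htilde F (fst p) (snd p)"
  shows "g (r, t) \<le> HF F r t"
  unfolding HF_def by (rule SUP_upper) (use assms in auto)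

text \<open>An inequality for \<open>\<tilde>H\<^sub>F\<close> under a continuous change of variables passes to the lower
  semicontinuous envelope; it may fail on a closed exceptional set \<open>E\<close>, because any minorant
  can be replaced by \<open>0\<close> there.\<close>

lemma HF_comp_le_mult:
  fixes A :: "real \<times> real \<Rightarrow> real \<times> real"
  assumes cont: "continuous_on quadrant A" and AQ: "\<forall>p\<in>quadrant. A p \<in> quadrant"
   and E: "closedin (top_of_set quadrant) E" and k: "k > 0"
   and le: "\<forall>p\<in>quadrant - E. Htilde F (fst (A p)) (snd (A p)) \<le> ennreal k * Htilde F (fst p) (snd p)"
   and p: "p \<in> quadrant - E"
  shows "HF F (fst (A p)) (snd (A p)) \<le> ennreal k * HF F (fst p) (snd p)"
proof -
  have EQ: "E \<subseteq> quadrant" using E closedin_imp_subset by auto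
  have "g (fst (A p), snd (A p)) \<le> ennreal k * HF F (fst p) (snd p)"
    if g: "lsc_on quadrant g" "\<forall>q\<in>quadrant. g q \<le> Htilde F (fst q) (snd q)" for g
  proof -
    define g' where "g' q = (if q \<in> E then 0 else ennreal (1/k) * g (A q))" for q
    have "lsc_on quadrant g'"
      unfolding lsc_on_def
    proof
      fix a
      have eq: "{x \<in> quadrant. g' x \<le> a} = E \<union> (quadrant \<inter> A -` {y \<in> quadrant. g y \<le> ennreal k * a})"
        using EQ AQ by (auto simp: g'_def ennreal_inverse_mult_le_iff[OF k])
      have "closedin (top_of_set quadrant) {y \<in> quadrant. g y \<le> ennreal k * a}"
        using g(1) unfolding lsc_on_def by blast
      then have "closedin (top_of_set quadrant) (quadrant \<inter> A -` {y \<in> quadrant. g y \<le> ennreal k * a})"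
        using cont AQ by (intro continuous_closedin_preimage_gen) auto
      then show "closedin (top_of_set quadrant) {x \<in> quadrant. g' x \<le> a}"
        unfolding eq using E by (intro closedin_Un) auto
    qed
    moreover have "\<forall>q\<in>quadrant. g' q \<le> Htilde F (fst q) (snd q)"
    proof
      fix q assume q: "q \<in> quadrant"
      show "g' q \<le> Htilde F (fst q) (snd q)"
      proof (cases "q \<in> E")
        case False
        have "g (A q) \<le> Htilde F (fst (A q)) (snd (A q))" using g(2) AQ q by blast
        also have "\<dots> \<le> ennreal k * Htilde F (fst q) (snd q)" using le q False by blast
        finally show ?thesis using False by (simp add: g'_def ennreal_inverse_mult_le_iff[OF k])
      qed (simp add: g'_def)
    qed
    ultimately have "g' (fst p, snd p) \<le> HF F (fst p) (snd p)" by (rule lsc_minorant_le_HF)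
    then show ?thesis using p by (simp add: g'_def ennreal_inverse_mult_le_iff[OF k])
  qed
  then show ?thesis unfolding HF_def[of F "fst (A p)"] by (auto intro!: SUP_least)
qed

lemma recF_difference_quotient_mono:
  assumes F: "F \<in> Gamma0" and th: "\<theta> > 0" and ab: "0 < a" "a \<le> b"
  shows "F (1 + a * \<theta>) / ennreal a \<le> F (1 + b * \<theta>) / ennreal b"
proof -
  define l where "l = a / b"
  have l: "0 \<le> l" "l \<le> 1" using ab by (auto simp: l_def)
  have eq: "(1 - l) * 1 + l * (1 + b * \<theta>) = 1 + a * \<theta>"
    using ab by (simp add: l_def field_simps)
  have "F (1 + a * \<theta>) \<le> ennreal (1 - l) * F 1 + ennreal l * F (1 + b * \<theta>)"
    using Gamma0_convexD[OF F _ _ l, of 1 "1 + b * \<theta>"] th ab unfolding eq by simp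
  then have "F (1 + a * \<theta>) \<le> ennreal l * F (1 + b * \<theta>)" using Gamma0_at_1[OF F] by simp
  then have "ennreal (1/a) * F (1 + a * \<theta>) \<le> ennreal (1/a) * (ennreal l * F (1 + b * \<theta>))"
    by (rule mult_left_mono) simp
  also have "\<dots> = ennreal (1/b) * F (1 + b * \<theta>)"
    using ab by (simp add: mult.assoc[symmetric] ennreal_mult'[symmetric] l_def)
  finally show ?thesis using ab by (simp add: divide_ennreal_eq_mult)
qed

lemma recF_eq_SUP:
  assumes F: "F \<in> Gamma0" and th: "\<theta> > 0"
  shows "recF F \<theta> = (SUP a\<in>{0<..}. F (1 + a * \<theta>) / ennreal a)"
proof -
  define u where "u a = F (1 + a * \<theta>) / ennreal a" for a
  define S where "S = (SUP a\<in>{0<..}. u a)"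
  have "(u \<longlongrightarrow> S) at_top"
  proof (rule order_tendstoI)
    fix y assume "y < S"
    then obtain a0 where a0: "a0 > 0" "y < u a0" unfolding S_def by (auto simp: less_SUP_iff)
    have "eventually (\<lambda>a. a \<ge> a0) at_top" by (rule eventually_ge_at_top)
    then show "eventually (\<lambda>a. y < u a) at_top"
    proof eventually_elim
      case (elim a)
      have "u a0 \<le> u a" unfolding u_def using recF_difference_quotient_mono[OF F th a0(1) elim] .
      then show ?case using a0(2) by order
    qed
  next
    fix y assume "S < y"
    have "eventually (\<lambda>a. a > (0::real)) at_top" by (rule eventually_gt_at_top)
    then show "eventually (\<lambda>a. u a < y) at_top"
    proof eventually_elim
      case (elim a)
      have "u a \<le> S" unfolding S_def using elim by (intro SUP_upper) auto
      then show ?case using \<open>S < y\<close> by order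
    qed
  qed
  then have "Lim at_top u = S" by (intro tendsto_Lim) auto
  then show ?thesis unfolding recF_def u_def S_def by simp
qed

lemma recF_mult_le:
  assumes F: "F \<in> Gamma0" and th: "\<theta> > 0" and k: "k > 0"
  shows "recF F (k * \<theta>) \<le> ennreal k * recF F \<theta>"
proof -
  have "F (1 + a * (k * \<theta>)) / ennreal a \<le> ennreal k * recF F \<theta>" if a: "a > 0" for a
  proof -
    have "ennreal (1/a) = ennreal k * ennreal (1 / (a * k))"
      using a k by (simp add: ennreal_mult'[symmetric])
    then have "F (1 + a * (k * \<theta>)) / ennreal a
               = ennreal k * (F (1 + (a * k) * \<theta>) / ennreal (a * k))"
      using a k by (simp add: divide_ennreal_eq_mult mult.assoc)
    also have "\<dots> \<le> ennreal k * recF F \<theta>"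
      unfolding recF_eq_SUP[OF F th] using a k by (intro mult_left_mono SUP_upper) auto
    finally show ?thesis .
  qed
  then show ?thesis unfolding recF_eq_SUP[OF F mult_pos_pos[OF k th]] by (auto intro: SUP_least)
qed

lemma persp_mult_le:
  assumes F: "F \<in> Gamma0" and th: "\<theta> > 0" and k: "k > 0" and r: "r \<ge> 0"
  shows "persp F (k * \<theta>) (k * r) \<le> ennreal k * persp F \<theta> r"
proof (cases "r > 0")
  case True
  then show ?thesis using k by (simp add: persp_def ennreal_mult' mult.assoc)
next
  case False
  then show ?thesis using r recF_mult_le[OF F th k] by (simp add: persp_def)
qed

lemma Htilde_mult_le:
  assumes F: "F \<in> Gamma0" and k: "k > 0" and r: "r \<ge> 0" and t: "t \<ge> 0"
  shows "Htilde F (k * r) (k * t) \<le> ennreal k * Htilde F r t"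
  unfolding Htilde_def[of F r t]
proof (rule ennreal_le_mult_INF[OF k], intro ballI)
  fix \<theta> :: real assume "\<theta> \<in> {0<..}"
  then have th: "\<theta> > 0" by simp
  have "Htilde F (k * r) (k * t) \<le> persp F (k * \<theta>) (k * r) + persp F (k * \<theta>) (k * t)"
    unfolding Htilde_def using th k by (intro INF_lower) auto
  also have "\<dots> \<le> ennreal k * persp F \<theta> r + ennreal k * persp F \<theta> t"
    by (intro add_mono persp_mult_le[OF F th k] r t)
  finally show "Htilde F (k * r) (k * t) \<le> ennreal k * (persp F \<theta> r + persp F \<theta> t)"
    by (simp add: distrib_left)
qed

lemma HF_mult_le:
  assumes F: "F \<in> Gamma0" and k: "k > 0" and r: "r \<ge> 0" and t: "t \<ge> 0"
  shows "HF F (k * r) (k * t) \<le> ennreal k * HF F r t"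
proof -
  define A where "A = (\<lambda>p::real\<times>real. (k * fst p, k * snd p))"
  have "continuous_on quadrant A" unfolding A_def by (intro continuous_intros)
  moreover have "\<forall>p\<in>quadrant. A p \<in> quadrant" using k by (auto simp: A_def quadrant_def)
  moreover have "\<forall>p\<in>quadrant - {}. Htilde F (fst (A p)) (snd (A p)) \<le> ennreal k * Htilde F (fst p) (snd p)"
    using Htilde_mult_le[OF F k] by (auto simp: A_def quadrant_def)
  moreover have "(r, t) \<in> quadrant - {}" using r t by (simp add: quadrant_def)
  ultimately show ?thesis using HF_comp_le_mult[OF _ _ closedin_empty k] by (fastforce simp: A_def)
qed

lemma HF_homogeneous:
  assumes F: "F \<in> Gamma0" and k: "k > 0" and r: "r \<ge> 0" and t: "t \<ge> 0"
  shows "HF F (k * r) (k * t) = ennreal k * HF F r t"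
proof (rule antisym)
  show "HF F (k * r) (k * t) \<le> ennreal k * HF F r t" by (rule HF_mult_le[OF assms])
  have "HF F r t = HF F ((1/k) * (k * r)) ((1/k) * (k * t))" using k by simp
  also have "\<dots> \<le> ennreal (1/k) * HF F (k * r) (k * t)"
    using k r t by (intro HF_mult_le[OF F]) auto
  finally have "ennreal k * HF F r t \<le> ennreal k * (ennreal (1/k) * HF F (k * r) (k * t))"
    by (rule mult_left_mono) simp
  then show "ennreal k * HF F r t \<le> HF F (k * r) (k * t)"
    using k by (simp add: ennreal_mult_inverse_cancel)
qed

lemma persp_convex:
  assumes F: "F \<in> Gamma0" and s1: "s1 > 0" and s2: "s2 > 0" and t1: "\<theta>1 \<ge> 0" and t2: "\<theta>2 \<ge> 0"
    and l: "0 \<le> l" "l \<le> 1"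
    and s: "s = (1 - l) * s1 + l * s2" and th: "\<theta> = (1 - l) * \<theta>1 + l * \<theta>2"
  shows "ennreal s * F (\<theta> / s)
         \<le> ennreal ((1 - l) * s1) * F (\<theta>1 / s1) + ennreal (l * s2) * F (\<theta>2 / s2)"
proof -
  have "(1 - l) * s1 \<ge> 0" "l * s2 \<ge> 0" using l s1 s2 by simp_all
  moreover have "(1 - l) * s1 > 0 \<or> l * s2 > 0" using l s1 s2 by (cases "l = 0") auto
  ultimately have sp: "s > 0" using s by linarith
  define m where "m = l * s2 / s"
  have m1: "1 - m = (1 - l) * s1 / s" using sp s by (simp add: m_def field_simps)
  have "l * s2 \<le> s" using s l s1 by (simp add: mult_nonneg_nonneg)
  then have m: "0 \<le> m" "m \<le> 1" using sp l s1 s2 by (auto simp: m_def)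
  have "(1 - m) * (\<theta>1 / s1) = (1 - l) * \<theta>1 / s" unfolding m1 using s1 by simp
  moreover have "m * (\<theta>2 / s2) = l * \<theta>2 / s" unfolding m_def using s2 by simp
  ultimately have eq: "(1 - m) * (\<theta>1 / s1) + m * (\<theta>2 / s2) = \<theta> / s"
    using th by (simp add: add_divide_distrib)
  have "F (\<theta> / s) \<le> ennreal (1 - m) * F (\<theta>1 / s1) + ennreal m * F (\<theta>2 / s2)"
    using Gamma0_convexD[OF F _ _ m, of "\<theta>1/s1" "\<theta>2/s2"] t1 t2 s1 s2 unfolding eq by simp
  then have "ennreal s * F (\<theta> / s)
             \<le> ennreal s * (ennreal (1 - m) * F (\<theta>1 / s1) + ennreal m * F (\<theta>2 / s2))"
    by (rule mult_left_mono) simp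
  also have "\<dots> = ennreal (s * (1 - m)) * F (\<theta>1 / s1) + ennreal (s * m) * F (\<theta>2 / s2)"
    using sp m by (simp add: distrib_left mult.assoc ennreal_mult)
  also have "s * (1 - m) = (1 - l) * s1" using sp m1 by simp
  also have "s * m = l * s2" using sp by (simp add: m_def)
  finally show ?thesis .
qed

lemma Htilde_chord_le:
  assumes F: "F \<in> Gamma0" and r: "r > 0" and t: "t > 0" and l: "0 < l" "l < 1"
  shows "Htilde F r ((1 - l) * r + l * t) \<le> ennreal l * Htilde F r t"
  unfolding Htilde_def[of F r t]
proof (rule ennreal_le_mult_INF[OF l(1)], intro ballI)
  fix \<theta> :: real assume "\<theta> \<in> {0<..}"
  then have th: "\<theta> > 0" by simp
  define \<theta>' where "\<theta>' = (1 - l) * r + l * \<theta>"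
  define v where "v = (1 - l) * r + l * t"
  have th': "\<theta>' > 0" using l r th by (auto simp: \<theta>'_def intro: add_pos_pos)
  have v: "v > 0" using l r t by (auto simp: v_def intro: add_pos_pos)
  have F1: "F 1 = 0" using Gamma0_at_1[OF F] .
  have "persp F \<theta>' r = ennreal r * F (\<theta>' / r)" using r by (simp add: persp_def)
  also have "\<dots> \<le> ennreal ((1 - l) * r) * F (r / r) + ennreal (l * r) * F (\<theta> / r)"
    by (rule persp_convex[OF F r r]) (use r th l in \<open>auto simp: \<theta>'_def algebra_simps\<close>)
  also have "\<dots> = ennreal l * persp F \<theta> r"
    using r l by (simp add: F1 persp_def ennreal_mult mult.assoc)
  finally have p1: "persp F \<theta>' r \<le> ennreal l * persp F \<theta> r" .
  have "persp F \<theta>' v = ennreal v * F (\<theta>' / v)" using v by (simp add: persp_def)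
  also have "\<dots> \<le> ennreal ((1 - l) * r) * F (r / r) + ennreal (l * t) * F (\<theta> / t)"
    by (rule persp_convex[OF F r t]) (use r th l in \<open>auto simp: \<theta>'_def v_def\<close>)
  also have "\<dots> = ennreal l * persp F \<theta> t"
    using r t l by (simp add: F1 persp_def ennreal_mult mult.assoc)
  finally have p2: "persp F \<theta>' v \<le> ennreal l * persp F \<theta> t" .
  have "Htilde F r v \<le> persp F \<theta>' r + persp F \<theta>' v"
    unfolding Htilde_def using th' by (intro INF_lower) auto
  also have "\<dots> \<le> ennreal l * persp F \<theta> r + ennreal l * persp F \<theta> t" by (intro add_mono p1 p2)
  finally show "Htilde F r ((1 - l) * r + l * t) \<le> ennreal l * (persp F \<theta> r + persp F \<theta> t)"
    by (simp add: v_def distrib_left)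
qed

lemma T1_chord_le:
  assumes F: "F \<in> Gamma0" and xy: "1 < x" "x < y"
  shows "T1 F x \<le> ennreal ((x - 1) / (y - 1)) * T1 F y"
proof -
  define l where "l = (x - 1) / (y - 1)"
  have l: "0 < l" "l < 1" using xy by (auto simp: l_def)
  have "l * (y - 1) = x - 1" using xy by (simp add: l_def)
  then have x_eq: "(1 - l) * 1 + l * y = x" by (simp add: algebra_simps)
  define A where "A = (\<lambda>p::real\<times>real. (fst p, (1 - l) * fst p + l * snd p))"
  define E where "E = quadrant \<inter> ({p::real\<times>real. fst p = 0} \<union> {p. snd p = 0})"
  have "continuous_on quadrant A" unfolding A_def by (intro continuous_intros)
  moreover have "\<forall>p\<in>quadrant. A p \<in> quadrant" using l by (auto simp: quadrant_def A_def)
  moreover have "closed ({p::real\<times>real. fst p = 0} \<union> {p. snd p = 0})"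
    by (intro closed_Un closed_Collect_eq continuous_intros)
  then have "closedin (top_of_set quadrant) E" unfolding E_def by (intro closedin_closed_Int)
  moreover have "\<forall>p\<in>quadrant - E. Htilde F (fst (A p)) (snd (A p)) \<le> ennreal l * Htilde F (fst p) (snd p)"
  proof
    fix p assume "p \<in> quadrant - E"
    then have "fst p > 0" "snd p > 0" by (auto simp: E_def quadrant_def less_le)
    then show "Htilde F (fst (A p)) (snd (A p)) \<le> ennreal l * Htilde F (fst p) (snd p)"
      using Htilde_chord_le[OF F _ _ l] by (simp add: A_def)
  qed
  moreover have "(1, y) \<in> quadrant - E" using xy by (auto simp: quadrant_def E_def)
  ultimately have "HF F (fst (A (1, y))) (snd (A (1, y))) \<le> ennreal l * HF F 1 y"
    using HF_comp_le_mult[OF _ _ _ l(1)] by fastforce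
  then show ?thesis using x_eq by (simp add: A_def T1_def l_def)
qed

section \<open>Functions of the form \<open>c|s - 1|\<close>\<close>

lemma eq_if_mono_and_square_le:
  fixes R :: "real \<Rightarrow> 'a::order"
  assumes mono: "\<And>x y. 1 < x \<Longrightarrow> x \<le> y \<Longrightarrow> R x \<le> R y"
    and square: "\<And>x. 1 < x \<Longrightarrow> R (x * x) \<le> R x"
    and xy: "1 < x" "1 < y"
  shows "R x = R y"
proof -
  have le: "R u \<le> R v" if u: "1 < u" and v: "1 < v" for u v
  proof -
    have pow: "R (v ^ 2 ^ n) \<le> R v" for n
    proof (induction n)
      case (Suc n)
      have "v ^ 2 ^ Suc n = v ^ 2 ^ n * v ^ 2 ^ n" by (simp add: power_add[symmetric] mult_2)
      moreover have "1 < v ^ 2 ^ n" using v by (simp add: one_less_power)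
      ultimately show ?case using square Suc.IH by (metis order_trans)
    qed simp
    obtain n where n: "u < v ^ n" using real_arch_pow[OF v] by blast
    have "v ^ n \<le> v ^ 2 ^ n" using v by (intro power_increasing) (auto intro: less_imp_le less_exp)
    then have "R u \<le> R (v ^ 2 ^ n)" using n u by (intro mono) auto
    also have "\<dots> \<le> R v" by (rule pow)
    finally show ?thesis .
  qed
  show ?thesis using le[OF xy] le[OF xy(2,1)] by (rule antisym)
qed

lemma eq_mult_minus_one_above_1:
  fixes F :: "real \<Rightarrow> ennreal"
  assumes square: "\<And>x. 1 < x \<Longrightarrow> F (x * x) \<le> F x + ennreal x * F x"
    and chord: "\<And>x y. 1 < x \<Longrightarrow> x < y \<Longrightarrow> F x \<le> ennreal ((x - 1) / (y - 1)) * F y"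
  shows "\<exists>c. \<forall>x>1. F x = c * ennreal (x - 1)"
proof -
  define R where "R x = F x * ennreal (1/(x - 1))" for x
  have mono: "R x \<le> R y" if xy: "1 < x" "x \<le> y" for x y
  proof (cases "x = y")
    case False
    then have "F x \<le> ennreal ((x - 1)/(y - 1)) * F y" using chord xy by simp
    then have "R x \<le> F y * (ennreal ((x - 1)/(y - 1)) * ennreal (1/(x - 1)))"
      unfolding R_def by (metis mult_right_mono zero_le mult.commute mult.assoc)
    also have "ennreal ((x - 1)/(y - 1)) * ennreal (1/(x - 1)) = ennreal (1/(y - 1))"
      using xy by (simp add: ennreal_mult[symmetric] field_simps)
    finally show ?thesis by (simp add: R_def)
  qed simp
  have sq: "R (x * x) \<le> R x" if x: "x > 1" for x
  proof -
    have "F (x * x) \<le> ennreal (1 + x) * F x"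
      using square[OF x] x by (simp add: ennreal_plus distrib_right)
    then have "R (x * x) \<le> F x * (ennreal (1 + x) * ennreal (1/(x * x - 1)))"
      unfolding R_def by (metis mult_right_mono zero_le mult.commute mult.assoc)
    also have "ennreal (1 + x) * ennreal (1/(x * x - 1)) = ennreal (1/(x - 1))"
    proof -
      have "x * x - 1 = (1 + x) * (x - 1)" by (simp add: algebra_simps)
      then have "(1 + x) * (1/(x * x - 1)) = 1/(x - 1)" using x by simp
      moreover have "0 \<le> 1/(x * x - 1)" using x by (simp add: less_1_mult less_imp_le)
      ultimately show ?thesis using x by (simp add: ennreal_mult[symmetric] del: ennreal_plus)
    qed
    finally show ?thesis by (simp add: R_def)
  qed
  have "F x = R 2 * ennreal (x - 1)" if x: "x > 1" for x
  proof -
    have "R x = R 2" using x by (intro eq_if_mono_and_square_le[of R, OF mono sq]) auto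
    moreover have "F x = R x * ennreal (x - 1)"
      using x by (simp add: R_def mult.assoc ennreal_mult[symmetric])
    ultimately show ?thesis by simp
  qed
  then show ?thesis by blast
qed

lemma eq_mult_abs_minus_one:
  fixes F :: "real \<Rightarrow> ennreal"
  assumes F1: "F 1 = 0"
    and square: "\<And>x. 1 < x \<Longrightarrow> F (x * x) \<le> F x + ennreal x * F x"
    and reflect: "\<And>s. 0 < s \<Longrightarrow> s < 1 \<Longrightarrow> F s = ennreal s * F (1/s)"
    and chord: "\<And>x y. 1 < x \<Longrightarrow> x < y \<Longrightarrow> F x \<le> ennreal ((x - 1) / (y - 1)) * F y"
  shows "\<exists>c. \<forall>s>0. F s = c * ennreal \<bar>s - 1\<bar>"
proof -
  obtain c where above_1: "\<And>x. 1 < x \<Longrightarrow> F x = c * ennreal (x - 1)"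
    using eq_mult_minus_one_above_1[OF square chord] by blast
  have "F s = c * ennreal \<bar>s - 1\<bar>" if s: "s > 0" for s
  proof -
    consider "s > 1" | "s = 1" | "s < 1" by linarith
    then show ?thesis
    proof cases
      case 3
      have "F s = ennreal s * (c * ennreal (1/s - 1))" using reflect above_1[of "1/s"] s 3 by simp
      also have "\<dots> = c * ennreal (s * (1/s - 1))"
        using s 3 by (simp add: ennreal_mult ac_simps)
      also have "s * (1/s - 1) = \<bar>s - 1\<bar>" using s 3 by (simp add: field_simps)
      finally show ?thesis .
    qed (use F1 above_1 in simp_all)
  qed
  then show ?thesis by blast
qed

section \<open>Fixed points of \<open>T\<^sub>1\<close>\<close>

lemma Gamma0_at_0:
  assumes F: "F \<in> Gamma0" and c: "\<forall>s>0. F s = c * ennreal \<bar>s - 1\<bar>"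
  shows "F 0 = c"
proof (rule antisym)
  have "closedin (top_of_set {0..}) {x\<in>{0..}. F x \<le> c}"
    using F unfolding Gamma0_def lsc_on_def by blast
  then have closed: "closed {x\<in>{0::real..}. F x \<le> c}" by (rule closedin_closed_trans) simp
  have "inverse (real (Suc n)) \<in> {x\<in>{0::real..}. F x \<le> c}" for n
  proof -
    have "\<bar>inverse (real (Suc n)) - 1\<bar> \<le> 1" by (simp add: field_simps)
    then have "c * ennreal \<bar>inverse (real (Suc n)) - 1\<bar> \<le> c * 1"
      by (intro mult_left_mono) (auto simp: ennreal_le_1)
    then show ?thesis using c by simp
  qed
  then show "F 0 \<le> c"
    using closed_sequentially[OF closed _ LIMSEQ_inverse_real_of_nat] by blast
  have "F ((1 - 1/2) * 0 + (1/2) * 1) \<le> ennreal (1 - 1/2) * F 0 + ennreal (1/2) * F 1"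
    using Gamma0_convexD[OF F, of 0 1 "1/2"] by simp
  then have "ennreal (1/2) * c \<le> ennreal (1/2) * F 0"
    using c Gamma0_at_1[OF F] by (simp add: mult.commute)
  then show "c \<le> F 0" by (subst (asm) ennreal_mult_le_mult_iff) auto
qed

lemma T1_fixed_point_imp_mult_abs:
  assumes F: "F \<in> Gamma0" and fixed: "\<forall>s\<ge>0. T1 F s = F s"
  shows "\<exists>c. \<forall>s\<ge>0. F s = c * ennreal \<bar>s - 1\<bar>"
proof -
  have F1: "F 1 = 0" using Gamma0_at_1[OF F] .
  have upper: "F s \<le> F \<theta> + ennreal s * F (\<theta>/s)" if th: "\<theta> > 0" and s: "s > 0" for \<theta> s
  proof -
    have "F s = HF F 1 s" using fixed s by (simp add: T1_def)
    also have "\<dots> \<le> Htilde F 1 s" using s by (intro HF_le_Htilde) auto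
    also have "\<dots> \<le> persp F \<theta> 1 + persp F \<theta> s" unfolding Htilde_def using th by (intro INF_lower) auto
    also have "\<dots> = F \<theta> + ennreal s * F (\<theta>/s)" using s by (simp add: persp_def)
    finally show ?thesis .
  qed
  have reflect_le: "F s \<le> ennreal s * F (1/s)" if s: "s > 0" for s
    using upper[of 1 s] s F1 by simp
  have reflect: "F s = ennreal s * F (1/s)" if s: "0 < s" for s
  proof (rule antisym)
    show "F s \<le> ennreal s * F (1/s)" using reflect_le s by simp
    have "ennreal s * F (1/s) \<le> ennreal s * (ennreal (1/s) * F s)"
      using reflect_le[of "1/s"] s by (intro mult_left_mono) simp_all
    then show "ennreal s * F (1/s) \<le> F s" using s by (simp add: ennreal_mult_inverse_cancel)
  qed
  have square: "F (x * x) \<le> F x + ennreal x * F x" if x: "x > 1" for x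
  proof -
    have "F (x * x) \<le> F x + ennreal (x * x) * F (1/x)" using upper[of x "x * x"] x by simp
    also have "F (1/x) = ennreal (1/x) * F x" using reflect[of "1/x"] x by simp
    also have "ennreal (x * x) * (ennreal (1/x) * F x) = ennreal x * F x"
      using x by (simp add: ennreal_mult' mult.assoc ennreal_mult_inverse_cancel)
    finally show ?thesis .
  qed
  have chord: "F x \<le> ennreal ((x - 1) / (y - 1)) * F y" if "1 < x" "x < y" for x y
    using T1_chord_le[OF F that] fixed that by simp
  obtain c where c: "\<forall>s>0. F s = c * ennreal \<bar>s - 1\<bar>"
    using eq_mult_abs_minus_one[OF F1 square reflect chord] by blast
  then have "F s = c * ennreal \<bar>s - 1\<bar>" if "s \<ge> 0" for s
    using Gamma0_at_0[OF F c] that by (cases "s = 0") auto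
  then show ?thesis by blast
qed

lemma persp_mult_abs:
  assumes F: "F \<in> Gamma0" and c: "\<forall>s\<ge>0. F s = c * ennreal \<bar>s - 1\<bar>"
    and th: "\<theta> > 0" and r: "r \<ge> 0"
  shows "persp F \<theta> r = c * ennreal \<bar>\<theta> - r\<bar>"
proof (cases "r > 0")
  case True
  have "persp F \<theta> r = c * ennreal (r * \<bar>\<theta>/r - 1\<bar>)"
    using True c th by (simp add: persp_def ennreal_mult ac_simps)
  also have "r * \<bar>\<theta>/r - 1\<bar> = \<bar>\<theta> - r\<bar>"
    using True by (simp add: abs_mult[symmetric] abs_of_pos field_simps)
  finally show ?thesis .
next
  case False
  have "F (1 + a * \<theta>) / ennreal a = c * ennreal \<theta>" if a: "a > 0" for a
    using c a th by (simp add: divide_ennreal_eq_mult ennreal_mult[symmetric] ac_simps)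
  then have "recF F \<theta> = c * ennreal \<theta>" unfolding recF_eq_SUP[OF F th] by simp
  then show ?thesis using False r th by (simp add: persp_def)
qed

lemma lsc_on_mult_abs_diff: "lsc_on quadrant (\<lambda>p. c * ennreal \<bar>fst p - snd p\<bar>)"
  unfolding lsc_on_def
proof
  fix a :: ennreal
  show "closedin (top_of_set quadrant) {x \<in> quadrant. c * ennreal \<bar>fst x - snd x\<bar> \<le> a}"
  proof (cases "a = top")
    case aT: False
    then obtain a' where a': "a = ennreal a'" "a' \<ge> 0" by (cases a) auto
    show ?thesis
    proof (cases "c = top")
      case True
      have "{x \<in> quadrant. c * ennreal \<bar>fst x - snd x\<bar> \<le> a} = quadrant \<inter> {x. fst x = snd x}"
        using True aT by (auto simp: ennreal_top_mult top_unique)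
      moreover have "closed {x::real\<times>real. fst x = snd x}"
        by (intro closed_Collect_eq continuous_intros)
      ultimately show ?thesis by (simp add: closedin_closed_Int)
    next
      case False
      then obtain c' where c': "c = ennreal c'" "c' \<ge> 0" by (cases c) auto
      have "{x \<in> quadrant. c * ennreal \<bar>fst x - snd x\<bar> \<le> a}
            = quadrant \<inter> {x. c' * \<bar>fst x - snd x\<bar> \<le> a'}"
        using c' a' by (auto simp: ennreal_mult[symmetric] ennreal_le_iff)
      moreover have "closed {x::real\<times>real. c' * \<bar>fst x - snd x\<bar> \<le> a'}"
        by (intro closed_Collect_le continuous_intros)
      ultimately show ?thesis by (simp add: closedin_closed_Int)
    qed
  qed simp
qed

lemma mult_abs_le_HF:
  assumes F: "F \<in> Gamma0" and c: "\<forall>s\<ge>0. F s = c * ennreal \<bar>s - 1\<bar>"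
  shows "c * ennreal \<bar>r - t\<bar> \<le> HF F r t"
proof -
  have "c * ennreal \<bar>fst p - snd p\<bar> \<le> Htilde F (fst p) (snd p)" if p: "p \<in> quadrant" for p
    unfolding Htilde_def
  proof (rule INF_greatest)
    fix \<theta> :: real assume "\<theta> \<in> {0<..}"
    then have th: "\<theta> > 0" by simp
    have "c * ennreal \<bar>fst p - snd p\<bar> \<le> c * ennreal (\<bar>\<theta> - fst p\<bar> + \<bar>\<theta> - snd p\<bar>)"
      by (intro mult_left_mono ennreal_leI) auto
    also have "\<dots> = persp F \<theta> (fst p) + persp F \<theta> (snd p)"
      using persp_mult_abs[OF F c th] p by (simp add: quadrant_def ennreal_plus distrib_left)
    finally show "c * ennreal \<bar>fst p - snd p\<bar> \<le> persp F \<theta> (fst p) + persp F \<theta> (snd p)" .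
  qed
  then show ?thesis using lsc_minorant_le_HF[OF lsc_on_mult_abs_diff] by fastforce
qed

lemma T1_fixed_point_if_mult_abs:
  assumes F: "F \<in> Gamma0" and c: "\<forall>s\<ge>0. F s = c * ennreal \<bar>s - 1\<bar>"
  shows "\<forall>s\<ge>0. T1 F s = F s"
proof (intro allI impI antisym)
  fix s :: real assume s: "s \<ge> 0"
  text \<open>The infimum defining \<open>\<tilde>H\<^sub>F(1, s)\<close> is attained at \<open>\<theta> = s\<close>, or at \<open>\<theta> = 1\<close> if \<open>s = 0\<close>.\<close>
  define \<theta> where "\<theta> = (if s > 0 then s else 1)"
  have th: "\<theta> > 0" by (simp add: \<theta>_def)
  have "T1 F s \<le> Htilde F 1 s" unfolding T1_def using s by (intro HF_le_Htilde) auto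
  also have "\<dots> \<le> persp F \<theta> 1 + persp F \<theta> s" unfolding Htilde_def using th by (intro INF_lower) auto
  also have "\<dots> = F s"
    using persp_mult_abs[OF F c th] s c by (auto simp: \<theta>_def abs_minus_commute)
  finally show "T1 F s \<le> F s" .
  show "F s \<le> T1 F s" using mult_abs_le_HF[OF F c, of 1 s] c s by (simp add: T1_def abs_minus_commute)
qed

section \<open>Marginal perspective functions that are metrics\<close>

lemma is_metric_nonneg_mult_abs:
  assumes c: "0 < c" and H: "\<forall>r\<ge>0. \<forall>t\<ge>0. D r t = ennreal (c * \<bar>r - t\<bar>)"
  shows "is_metric_nonneg D"
  unfolding is_metric_nonneg_def
proof (intro conjI allI impI)
  fix x y :: real assume x: "x \<ge> 0" and y: "y \<ge> 0"
  show "D x y < \<infinity>" using H x y by simp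
  show "D x y = D y x" using H x y by (simp add: abs_minus_commute)
  show "D x y = 0 \<longleftrightarrow> x = y" using H x y c by (simp add: ennreal_eq_0_iff mult_le_0_iff)
  fix z :: real assume z: "z \<ge> 0"
  have "ennreal (c * \<bar>x - z\<bar>) \<le> ennreal (c * \<bar>x - y\<bar> + c * \<bar>y - z\<bar>)"
    using c by (intro ennreal_leI) (simp add: distrib_left[symmetric] mult_left_mono)
  then show "D x z \<le> D x y + D y z"
    using H x y z c by (simp add: ennreal_plus[symmetric] del: ennreal_plus)
qed

lemma
  assumes "is_metric_nonneg D" "x \<ge> 0" "y \<ge> 0"
  shows is_metric_nonneg_finite: "D x y < \<infinity>"
    and is_metric_nonneg_eq_0_iff: "D x y = 0 \<longleftrightarrow> x = y"
    and is_metric_nonneg_sym: "D x y = D y x"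
  using assms unfolding is_metric_nonneg_def by simp_all

lemma is_metric_nonneg_triangle:
  assumes "is_metric_nonneg D" "x \<ge> 0" "y \<ge> 0" "z \<ge> 0"
  shows "D x z \<le> D x y + D y z"
  using assms unfolding is_metric_nonneg_def by simp

lemma metric_HF_T1_pos:
  assumes G: "G \<in> Gamma0" and M: "is_metric_nonneg (HF G)"
  shows "\<exists>c>0. \<forall>s>0. T1 G s = ennreal (c * \<bar>s - 1\<bar>)"
proof -
  have T1_1: "T1 G 1 = 0" using is_metric_nonneg_eq_0_iff[OF M] by (simp add: T1_def)
  have square: "T1 G (x * x) \<le> T1 G x + ennreal x * T1 G x" if x: "x > 1" for x
  proof -
    have "HF G 1 (x * x) \<le> HF G 1 x + HF G x (x * x)"
      using x by (intro is_metric_nonneg_triangle[OF M]) auto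
    also have "HF G x (x * x) = ennreal x * HF G 1 x" using HF_homogeneous[OF G, of x 1 x] x by simp
    finally show ?thesis by (simp add: T1_def)
  qed
  have reflect: "T1 G s = ennreal s * T1 G (1/s)" if s: "0 < s" "s < 1" for s
  proof -
    have "HF G 1 s = HF G (s * 1) (s * (1/s))"
      using is_metric_nonneg_sym[OF M, of 1 s] s by simp
    also have "\<dots> = ennreal s * HF G 1 (1/s)" using s by (intro HF_homogeneous[OF G]) auto
    finally show ?thesis by (simp add: T1_def)
  qed
  obtain c where c: "\<forall>s>0. T1 G s = c * ennreal \<bar>s - 1\<bar>"
    using eq_mult_abs_minus_one[OF T1_1 square reflect T1_chord_le[OF G]] by blast
  have "T1 G 2 = c" using c by simp
  moreover have "T1 G 2 < \<infinity>" "T1 G 2 \<noteq> 0"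
    using is_metric_nonneg_finite[OF M] is_metric_nonneg_eq_0_iff[OF M] by (simp_all add: T1_def)
  ultimately have "c \<noteq> top" "c \<noteq> 0" by auto
  then obtain c' where "c = ennreal c'" "c' > 0" by (cases c) (auto simp: less_le)
  then show ?thesis using c by (auto simp: ennreal_mult)
qed

text \<open>The value at the boundary is pinned down by two instances of the triangle inequality:
  \<open>1 \<rightarrow> 1/2 \<rightarrow> 0\<close> gives \<open>H(1,0) \<le> c\<close>, and \<open>1 \<rightarrow> 0 \<rightarrow> s\<close> for large \<open>s\<close> gives
  \<open>c \<le> H(1,0)\<close>.\<close>

lemma metric_HF_T1_zero:
  assumes G: "G \<in> Gamma0" and M: "is_metric_nonneg (HF G)"
    and c: "\<forall>s>0. T1 G s = ennreal (c * \<bar>s - 1\<bar>)" and cpos: "c > 0"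
  shows "T1 G 0 = ennreal c"
proof -
  have "HF G 1 0 < \<infinity>" using is_metric_nonneg_finite[OF M] by simp
  then obtain h where h: "HF G 1 0 = ennreal h" "h \<ge> 0" by (cases "HF G 1 0") auto
  have s0: "HF G s 0 = ennreal (s * h)" if "s > 0" for s
    using HF_homogeneous[OF G, of s 1 0] that h by (simp add: ennreal_mult)
  have Fpos: "HF G 1 s = ennreal (c * \<bar>s - 1\<bar>)" if "s > 0" for s
    using c that by (simp add: T1_def)
  have "h \<le> c"
  proof -
    have "HF G 1 0 \<le> HF G 1 (1/2) + HF G (1/2) 0" by (intro is_metric_nonneg_triangle[OF M]) auto
    then have "ennreal h \<le> ennreal (c * (1/2) + (1/2) * h)"
      using Fpos[of "1/2"] s0[of "1/2"] h cpos by (simp add: ennreal_plus[symmetric] del: ennreal_plus)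
    then show ?thesis using cpos h by (simp add: ennreal_le_iff del: ennreal_plus)
  qed
  moreover have "c \<le> h"
  proof (rule ccontr)
    assume "\<not> c \<le> h"
    then have hc: "h < c" by simp
    define s where "s = (c + h)/(c - h) + 1"
    have sp: "s > 1" using hc h cpos by (simp add: s_def)
    have "HF G 1 s \<le> HF G 1 0 + HF G 0 s" using sp by (intro is_metric_nonneg_triangle[OF M]) auto
    also have "HF G 0 s = HF G s 0" using is_metric_nonneg_sym[OF M] sp by simp
    finally have "ennreal (c * (s - 1)) \<le> ennreal (h + s * h)"
      using Fpos[of s] s0[of s] sp h by (simp add: ennreal_plus[symmetric] del: ennreal_plus)
    then have "c * (s - 1) \<le> h + s * h" using h sp by (simp add: ennreal_le_iff del: ennreal_plus)
    moreover have "c + h = (s - 1) * (c - h)" using hc by (simp add: s_def field_simps)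
    ultimately show False using hc by (simp add: algebra_simps)
  qed
  ultimately show ?thesis using h by (simp add: T1_def)
qed

lemma metric_HF_eq_mult_abs:
  assumes G: "G \<in> Gamma0" and M: "is_metric_nonneg (HF G)"
    and c: "\<forall>s\<ge>0. T1 G s = ennreal (c * \<bar>s - 1\<bar>)" and cpos: "c > 0"
    and r: "r \<ge> 0" and t: "t \<ge> 0"
  shows "HF G r t = ennreal (c * \<bar>r - t\<bar>)"
proof (cases "r > 0")
  case True
  have "HF G r t = HF G (r * 1) (r * (t/r))" using True by simp
  also have "\<dots> = ennreal r * ennreal (c * \<bar>t/r - 1\<bar>)"
    using HF_homogeneous[OF G True, of 1 "t/r"] c[rule_format, of "t/r"] True t
    by (simp add: T1_def)
  also have "\<dots> = ennreal (c * \<bar>r * (t/r - 1)\<bar>)"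
    using True cpos by (simp add: ennreal_mult[symmetric] abs_mult ac_simps)
  also have "r * (t/r - 1) = t - r" using True by (simp add: field_simps)
  finally show ?thesis by (simp add: abs_minus_commute)
next
  case False
  then have "r = 0" using r by simp
  moreover have "HF G 0 t = HF G t 0" "HF G 0 0 = 0"
    using is_metric_nonneg_sym[OF M] is_metric_nonneg_eq_0_iff[OF M] t by simp_all
  moreover have "HF G t 0 = ennreal (c * t)" if "t > 0"
    using HF_homogeneous[OF G that, of 1 0] c that cpos by (simp add: T1_def ennreal_mult mult.commute)
  ultimately show ?thesis using t by (cases "t = 0") auto
qed

lemma metric_HF_imp_mult_abs:
  assumes G: "G \<in> Gamma0" and M: "is_metric_nonneg (HF G)"
  shows "\<exists>c. 0 < c \<and> (\<forall>r\<ge>0. \<forall>t\<ge>0. HF G r t = ennreal (c * \<bar>r - t\<bar>))"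
proof -
  obtain c where c: "c > 0" "\<forall>s>0. T1 G s = ennreal (c * \<bar>s - 1\<bar>)"
    using metric_HF_T1_pos[OF G M] by blast
  then have "\<forall>s\<ge>0. T1 G s = ennreal (c * \<bar>s - 1\<bar>)"
    using metric_HF_T1_zero[OF G M c(2) c(1)] by (auto simp: le_less)
  then show ?thesis using metric_HF_eq_mult_abs[OF G M _ c(1)] c(1) by blast
qed

theorem mainTheorem5:
  shows "(\<forall>F\<in>Gamma0. (\<forall>s\<ge>0. T1 F s = F s) \<longleftrightarrow>
            (\<exists>c::ennreal. \<forall>s\<ge>0. F s = c * ennreal \<bar>s - 1\<bar>))
       \<and> (\<forall>G\<in>Gamma0. is_metric_nonneg (HF G) \<longleftrightarrow>
            (\<exists>c::real. 0 < c \<and> (\<forall>r\<ge>0. \<forall>t\<ge>0. HF G r t = ennreal (c * \<bar>r - t\<bar>))))"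
proof (intro conjI ballI)
  fix F assume "F \<in> Gamma0"
  then show "(\<forall>s\<ge>0. T1 F s = F s) \<longleftrightarrow> (\<exists>c. \<forall>s\<ge>0. F s = c * ennreal \<bar>s - 1\<bar>)"
    using T1_fixed_point_imp_mult_abs T1_fixed_point_if_mult_abs by blast
next
  fix G assume "G \<in> Gamma0"
  then show "is_metric_nonneg (HF G) \<longleftrightarrow>
      (\<exists>c. 0 < c \<and> (\<forall>r\<ge>0. \<forall>t\<ge>0. HF G r t = ennreal (c * \<bar>r - t\<bar>)))"
    using metric_HF_imp_mult_abs is_metric_nonneg_mult_abs by blast
qed

end
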